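(* Let $\Sigma\subset Z$ be a centred curve of bidegree $(k,k)$. If a point $(w,z)\in\Sigma$ is fixed by a nontrivial rotation of $H^3$ preserving $(0,0,1)$, then $w=z$.
   Context: $H^3$ is the upper half-space model; $\hat w=-1/\bar w$; $Z=\mathbb{P}^1\times\mathbb{P}^1\setminus\{\hat w=z\}$ is the space of oriented geodesics, $(w,z)$ the geodesic from $\hat w$ to $z$; isometries act on $Z$ through their action on endpoints. A curve given by $(-w)^k\langle q(\hat w),q(z)\rangle=0$ with $q(z)=\sum_j\sqrt{\binom kj}z^jv_j$, $v_j\in\mathbb{C}^{k+1}$, is centred if $\sum_j(2j-k)\|v_j\|^2=0$ and $\sum_j\sqrt{(j+1)(k-j)}\langle v_j,v_{j+1}\rangle=0$. *)

theory Defs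
  imports Complex_Main
begin

(* Points of P^1 are given by homogeneous coordinates (x0,x1) \<noteq> (0,0);
   the affine coordinate is x0/x1, so [z:1] is z and [1:0] is \<infinity>. *)

definition proj_eq :: "complex \<times> complex \<Rightarrow> complex \<times> complex \<Rightarrow> bool" where
  "proj_eq x y \<longleftrightarrow> (\<exists>l. l \<noteq> 0 \<and> fst x = l * fst y \<and> snd x = l * snd y)"

(* antipodal map  w \<mapsto> -1/conj w  in homogeneous coordinates *)
definition hat :: "complex \<times> complex \<Rightarrow> complex \<times> complex" where
  "hat x = (- cnj (snd x), cnj (fst x))"

(* the space Z of oriented geodesics: (w,z) with hat w \<noteq> z *)
definition inZ :: "complex \<times> complex \<Rightarrow> complex \<times> complex \<Rightarrow> bool" where
  "inZ w z \<longleftrightarrow> w \<noteq> (0,0) \<and> z \<noteq> (0,0) \<and> \<not> proj_eq (hat w) z"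

(* homogenised q(z) = \<Sum>_j sqrt(k choose j) z^j v_j ; vectors v_j \<in> C^(k+1) are v j :: nat \<Rightarrow> complex
   with components l = 0..k *)
definition qvec :: "nat \<Rightarrow> (nat \<Rightarrow> nat \<Rightarrow> complex) \<Rightarrow> complex \<times> complex \<Rightarrow> nat \<Rightarrow> complex" where
  "qvec k v x l = (\<Sum>j\<le>k. complex_of_real (sqrt (real (k choose j))) * fst x ^ j * snd x ^ (k - j) * v j l)"

definition herm :: "nat \<Rightarrow> (nat \<Rightarrow> complex) \<Rightarrow> (nat \<Rightarrow> complex) \<Rightarrow> complex" where
  "herm k a b = (\<Sum>l\<le>k. cnj (a l) * b l)"

(* bihomogeneous form of bidegree (k,k) defining the curve, i.e. (-w)^k <q(hat w), q(z)> *)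
definition curve_form :: "nat \<Rightarrow> (nat \<Rightarrow> nat \<Rightarrow> complex) \<Rightarrow> complex \<times> complex \<Rightarrow> complex \<times> complex \<Rightarrow> complex" where
  "curve_form k v w z = herm k (qvec k v (hat w)) (qvec k v z)"

definition curve :: "nat \<Rightarrow> (nat \<Rightarrow> nat \<Rightarrow> complex) \<Rightarrow> ((complex \<times> complex) \<times> (complex \<times> complex)) set" where
  "curve k v = {(w, z). inZ w z \<and> curve_form k v w z = 0}"

definition is_curve :: "nat \<Rightarrow> (nat \<Rightarrow> nat \<Rightarrow> complex) \<Rightarrow> bool" where
  "is_curve k v \<longleftrightarrow> k \<ge> 1 \<and> (\<exists>w z. curve_form k v w z \<noteq> 0)"

definition centred :: "nat \<Rightarrow> (nat \<Rightarrow> nat \<Rightarrow> complex) \<Rightarrow> bool" where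
  "centred k v \<longleftrightarrow>
     (\<Sum>j\<le>k. (2 * real j - real k) * (\<Sum>l\<le>k. (cmod (v j l))\<^sup>2)) = 0 \<and>
     (\<Sum>j<k. complex_of_real (sqrt (real ((j + 1) * (k - j)))) * herm k (v j) (v (j + 1))) = 0"

definition mob :: "complex \<Rightarrow> complex \<Rightarrow> complex \<Rightarrow> complex \<Rightarrow> complex \<times> complex \<Rightarrow> complex \<times> complex" where
  "mob a b c d x = (a * fst x + b * snd x, c * fst x + d * snd x)"

(* Poincare extension to H^3 = {(x,t) : x \<in> C, t > 0} (point x + t j) *)
definition poinc :: "complex \<Rightarrow> complex \<Rightarrow> complex \<Rightarrow> complex \<Rightarrow> complex \<times> real \<Rightarrow> complex \<times> real" where
  "poinc a b c d p = (let x = fst p; t = snd p;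
      N = (cmod (c * x + d))\<^sup>2 + (cmod c)\<^sup>2 * t\<^sup>2
    in (((a * x + b) * cnj (c * x + d) + a * cnj c * complex_of_real (t\<^sup>2)) / complex_of_real N, t / N))"

definition nontriv_rotation :: "complex \<Rightarrow> complex \<Rightarrow> complex \<Rightarrow> complex \<Rightarrow> bool" where
  "nontriv_rotation a b c d \<longleftrightarrow> a * d - b * c = 1 \<and> poinc a b c d (0, 1) = (0, 1) \<and>
     (\<exists>p. snd p > 0 \<and> poinc a b c d p \<noteq> p)"

(* action on Z: the geodesic from hat w to z goes to the one from g(hat w) to g z *)
definition fixes_Z :: "complex \<Rightarrow> complex \<Rightarrow> complex \<Rightarrow> complex \<Rightarrow> complex \<times> complex \<Rightarrow> complex \<times> complex \<Rightarrow> bool" where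
  "fixes_Z a b c d w z \<longleftrightarrow> proj_eq (hat (mob a b c d (hat w))) w \<and> proj_eq (mob a b c d z) z"

end

theory Submission
  imports Defs
begin

text \<open>The stabiliser of the base point (0,0,1) in SL(2,C) is SU(2). A unitary matrix
  with two non-orthogonal, linearly independent eigenvectors is scalar and hence acts
  trivially on H^3; so the two fixed points on P^1 of a nontrivial rotation are orthogonal,
  i.e. antipodal. The endpoints hat w and z of a fixed geodesic are fixed and distinct,
  hence z is the antipode of hat w, which is w. Only the fact that (w,z) lies in Z is used:
  neither the equation of the curve nor centredness plays a role.\<close>

definition in_SU2 :: "complex \<Rightarrow> complex \<Rightarrow> complex \<Rightarrow> complex \<Rightarrow> bool" where
  "in_SU2 a b c d \<longleftrightarrow> a = cnj d \<and> b = - cnj c \<and> c * cnj c + d * cnj d = 1"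

definition hprod :: "complex \<times> complex \<Rightarrow> complex \<times> complex \<Rightarrow> complex" where
  "hprod x y = cnj (fst x) * fst y + cnj (snd x) * snd y"

lemma proj_eq_iff_cross:
  assumes "x \<noteq> (0, 0)" "y \<noteq> (0, 0)"
  shows "proj_eq x y \<longleftrightarrow> fst x * snd y = snd x * fst y"
proof
  assume "proj_eq x y"
  then show "fst x * snd y = snd x * fst y"
    unfolding proj_eq_def by auto
next
  assume cross: "fst x * snd y = snd x * fst y"
  show "proj_eq x y"
  proof (cases "fst y = 0")
    case True
    then have "snd y \<noteq> 0" "fst x = 0"
      using assms(2) cross by (auto simp: prod_eq_iff)
    then show ?thesis
      unfolding proj_eq_def using True assms(1) by (intro exI[of _ "snd x / snd y"]) (auto simp: prod_eq_iff)
  next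
    case False
    then have "fst x \<noteq> 0"
      using assms(1) cross by (auto simp: prod_eq_iff)
    moreover have "snd x = fst x / fst y * snd y"
      using cross False by (simp add: field_simps)
    ultimately show ?thesis
      unfolding proj_eq_def using False by (intro exI[of _ "fst x / fst y"]) auto
  qed
qed

lemma hat_eq_0_iff [simp]: "hat x = (0, 0) \<longleftrightarrow> x = (0, 0)"
  by (auto simp: hat_def prod_eq_iff)

lemma proj_eq_hat_swap:
  assumes "proj_eq (hat x) y"
  shows "proj_eq x (hat y)"
proof -
  obtain l where "l \<noteq> 0" "- cnj (snd x) = l * fst y" "cnj (fst x) = l * snd y"
    using assms by (auto simp: proj_eq_def hat_def)
  then have "fst x = cnj l * cnj (snd y)" "snd x = - cnj l * cnj (fst y)"
    by (metis complex_cnj_cnj complex_cnj_mult, metis complex_cnj_cnj complex_cnj_minus complex_cnj_mult minus_minus mult_minus_left)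
  then show ?thesis
    unfolding proj_eq_def hat_def using \<open>l \<noteq> 0\<close> by (intro exI[of _ "- cnj l"]) auto
qed

lemma hprod_hat: "hprod (hat x) y = fst x * snd y - snd x * fst y"
  by (simp add: hprod_def hat_def)

lemma hprod_self_eq_0_iff: "hprod x x = 0 \<longleftrightarrow> x = (0, 0)"
proof -
  have "hprod x x = of_real ((cmod (fst x))\<^sup>2 + (cmod (snd x))\<^sup>2)"
    unfolding hprod_def of_real_add complex_norm_square by (simp add: mult.commute)
  then have "hprod x x = 0 \<longleftrightarrow> (cmod (fst x))\<^sup>2 + (cmod (snd x))\<^sup>2 = 0"
    by (simp only: of_real_eq_0_iff)
  then show ?thesis
    by (simp add: add_nonneg_eq_0_iff prod_eq_iff)
qed

lemma stabiliser_base_point_in_SU2: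
  assumes det: "a * d - b * c = 1" and fixes_base: "poinc a b c d (0, 1) = (0, 1)"
  shows "in_SU2 a b c d"
proof -
  define N where "N = (cmod d)\<^sup>2 + (cmod c)\<^sup>2"
  have "poinc a b c d (0, 1) = ((b * cnj d + a * cnj c) / of_real N, 1 / N)"
    unfolding poinc_def N_def by (simp add: Let_def)
  with fixes_base have "N = 1" and orth: "b * cnj d + a * cnj c = 0"
    by auto
  have "c * cnj c + d * cnj d = of_real N"
    unfolding N_def of_real_add complex_norm_square by simp
  with \<open>N = 1\<close> have norm: "c * cnj c + d * cnj d = 1"
    by simp
  \<comment> \<open>(a, b) solves a d - b c = 1, a cnj c + b cnj d = 0, a system of determinant |c|^2 + |d|^2 = 1.\<close>
  have "a = a * (c * cnj c + d * cnj d)"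
    using norm by simp
  also have "\<dots> = cnj d * (a * d - b * c) + c * (b * cnj d + a * cnj c)"
    by (simp add: algebra_simps)
  finally have "a = cnj d"
    using det orth by simp
  have "b = b * (c * cnj c + d * cnj d)"
    using norm by simp
  also have "\<dots> = - cnj c * (a * d - b * c) + d * (b * cnj d + a * cnj c)"
    by (simp add: algebra_simps)
  finally have "b = - cnj c"
    using det orth by simp
  with \<open>a = cnj d\<close> norm show ?thesis
    by (simp add: in_SU2_def)
qed

lemma hprod_mob_SU2:
  assumes "in_SU2 a b c d"
  shows "hprod (mob a b c d x) (mob a b c d y) = hprod x y"
proof -
  have a: "a = cnj d" and b: "b = - cnj c" and norm: "c * cnj c + d * cnj d = 1"
    using assms by (simp_all add: in_SU2_def)
  have "hprod (mob a b c d x) (mob a b c d y) = hprod x y * (c * cnj c + d * cnj d)"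
    unfolding a b hprod_def mob_def by (simp add: algebra_simps)
  with norm show ?thesis
    by simp
qed

lemma SU2_eigenvalues_eq:
  assumes "in_SU2 a b c d"
    and eig_x: "mob a b c d x = (l * fst x, l * snd x)" and eig_y: "mob a b c d y = (m * fst y, m * snd y)"
    and "x \<noteq> (0, 0)" and "hprod x y \<noteq> 0"
  shows "m = l" and "cnj l * l = 1"
proof -
  have "cnj l * m * hprod x y = hprod x y"
    using hprod_mob_SU2[OF assms(1), of x y] eig_x eig_y by (simp add: hprod_def algebra_simps)
  then have lm: "cnj l * m = 1"
    using \<open>hprod x y \<noteq> 0\<close> by simp
  have "cnj l * l * hprod x x = hprod x x"
    using hprod_mob_SU2[OF assms(1), of x x] eig_x by (simp add: hprod_def algebra_simps)
  then show ll: "cnj l * l = 1"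
    using \<open>x \<noteq> (0, 0)\<close> by (simp add: hprod_self_eq_0_iff)
  have "m = l * (cnj l * m)"
    using ll by (simp add: algebra_simps)
  then show "m = l"
    using lm by simp
qed

lemma mob_eq_scalar_of_independent_eigenvectors:
  assumes "mob a b c d x = (l * fst x, l * snd x)" and "mob a b c d y = (l * fst y, l * snd y)"
    and indep: "fst x * snd y - snd x * fst y \<noteq> 0"
  shows "a = l" "b = 0" "c = 0" "d = l"
proof -
  obtain x0 x1 y0 y1 where x: "x = (x0, x1)" and y: "y = (y0, y1)"
    by (cases x, cases y)
  have ex: "(a - l) * x0 + b * x1 = 0" "c * x0 + (d - l) * x1 = 0"
    and ey: "(a - l) * y0 + b * y1 = 0" "c * y0 + (d - l) * y1 = 0"
    using assms(1,2) by (simp_all add: x y mob_def algebra_simps)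
  let ?D = "x0 * y1 - x1 * y0"
  have "(a - l) * ?D = y1 * ((a - l) * x0 + b * x1) - x1 * ((a - l) * y0 + b * y1)"
    "b * ?D = x0 * ((a - l) * y0 + b * y1) - y0 * ((a - l) * x0 + b * x1)"
    "c * ?D = y1 * (c * x0 + (d - l) * x1) - x1 * (c * y0 + (d - l) * y1)"
    "(d - l) * ?D = x0 * (c * y0 + (d - l) * y1) - y0 * (c * x0 + (d - l) * x1)"
    by (simp_all add: algebra_simps)
  with indep show "a = l" "b = 0" "c = 0" "d = l"
    unfolding ex ey x y by simp_all
qed

lemma poinc_scalar_unit:
  assumes "cnj l * l = 1"
  shows "poinc l 0 0 l p = p"
proof -
  have "(cmod l)\<^sup>2 = 1"
    using assms complex_norm_square[of l] by (metis mult.commute of_real_eq_1_iff)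
  moreover have "l * fst p * cnj l = fst p"
    using assms by (simp add: algebra_simps)
  ultimately show ?thesis
    by (simp add: poinc_def Let_def prod_eq_iff)
qed

lemma nontriv_rotation_fixed_points_orthogonal:
  assumes rot: "nontriv_rotation a b c d"
    and "x \<noteq> (0, 0)" "y \<noteq> (0, 0)" "\<not> proj_eq x y"
    and fix_x: "proj_eq (mob a b c d x) x" and fix_y: "proj_eq (mob a b c d y) y"
  shows "hprod x y = 0"
proof (rule ccontr)
  assume nonorth: "hprod x y \<noteq> 0"
  have SU2: "in_SU2 a b c d"
    using rot stabiliser_base_point_in_SU2 by (simp add: nontriv_rotation_def)
  obtain l m where l: "mob a b c d x = (l * fst x, l * snd x)"
    and m: "mob a b c d y = (m * fst y, m * snd y)"
    using fix_x fix_y by (auto simp: proj_eq_def prod_eq_iff)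
  have "m = l" and unit: "cnj l * l = 1"
    using SU2_eigenvalues_eq[OF SU2 l m \<open>x \<noteq> (0, 0)\<close> nonorth] by simp_all
  moreover have "fst x * snd y - snd x * fst y \<noteq> 0"
    using assms(2-4) by (simp add: proj_eq_iff_cross)
  ultimately have "a = l" "b = 0" "c = 0" "d = l"
    using mob_eq_scalar_of_independent_eigenvectors[OF l] m by simp_all
  then show False
    using rot poinc_scalar_unit[OF unit] by (simp add: nontriv_rotation_def)
qed

theorem mainTheorem6:
  fixes k :: nat and v :: "nat \<Rightarrow> nat \<Rightarrow> complex"
    and a b c d :: complex and w z :: "complex \<times> complex"
  assumes "is_curve k v" and "centred k v"
    and "(w, z) \<in> curve k v"
    and "nontriv_rotation a b c d"
    and "fixes_Z a b c d w z"
  shows "proj_eq w z"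
proof -
  have w: "w \<noteq> (0, 0)" and z: "z \<noteq> (0, 0)" and "\<not> proj_eq (hat w) z"
    using assms(3) by (auto simp: curve_def inZ_def)
  moreover have "proj_eq (mob a b c d (hat w)) (hat w)" and "proj_eq (mob a b c d z) z"
    using assms(5) proj_eq_hat_swap by (auto simp: fixes_Z_def)
  ultimately have "hprod (hat w) z = 0"
    using nontriv_rotation_fixed_points_orthogonal[OF assms(4)] by simp
  then show ?thesis
    using w z by (simp add: hprod_hat proj_eq_iff_cross)
qed

end
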